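(* Let $G$ be a graph with $L(G)=2l(G)$. Then there do not exist two distinct vertices $u,v$ of degree one in $G$ that are adjacent to the same vertex $w$.
   Context: Graphs are finite, undirected, without loops or multiple edges. $\nu(G)$ denotes the maximum size of a matching of $G$; a matching is maximum if it has $\nu(G)$ edges. For $F\subseteq E(G)$, $G\setminus F$ is the graph with vertex set $V(G)$ and edge set $E(G)\setminus F$. Define $L(G)=\max\{\nu(G\setminus F): F \text{ a maximum matching of } G\}$ and $l(G)=\min\{\nu(G\setminus F): F \text{ a maximum matching of } G\}$. *)

theory Defs
  imports Main
begin

definition simple_graph :: "'a set \<Rightarrow> 'a set set \<Rightarrow> bool" where
  "simple_graph V E \<longleftrightarrow> finite V \<and> (\<forall>e\<in>E. e \<subseteq> V \<and> card e = 2)"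

definition matching :: "'a set set \<Rightarrow> 'a set set \<Rightarrow> bool" where
  "matching E M \<longleftrightarrow> M \<subseteq> E \<and> (\<forall>e\<in>M. \<forall>f\<in>M. e \<noteq> f \<longrightarrow> e \<inter> f = {})"

definition nu :: "'a set set \<Rightarrow> nat" where
  "nu E = Max {card M | M. matching E M}"

definition max_matching :: "'a set set \<Rightarrow> 'a set set \<Rightarrow> bool" where
  "max_matching E F \<longleftrightarrow> matching E F \<and> card F = nu E"

text \<open>G minus F has the same vertex set and edge set E - F.\<close>
definition LL :: "'a set set \<Rightarrow> nat" where
  "LL E = Max {nu (E - F) | F. max_matching E F}"

definition ll :: "'a set set \<Rightarrow> nat" where
  "ll E = Min {nu (E - F) | F. max_matching E F}"

definition degree :: "'a set set \<Rightarrow> 'a \<Rightarrow> nat" where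
  "degree E v = card {e \<in> E. v \<in> e}"

end

theory Submission
  imports Defs
begin

text \<open>Let \<open>p\<close>, \<open>q\<close> be pendant vertices at \<open>w\<close>, let \<open>F'\<close> be a maximum matching with
  \<open>\<nu>(G \<setminus> F') = L(G)\<close> and \<open>M\<close> a maximum matching of \<open>G \<setminus> F'\<close>. At most one of \<open>pw\<close>, \<open>qw\<close> lies
  in \<open>M\<close>, say \<open>pw \<notin> M\<close>; exchanging the edge of \<open>F'\<close> at \<open>w\<close> for \<open>pw\<close> keeps \<open>F'\<close> maximum and
  \<open>M\<close> inside its complement. For every maximum matching \<open>F\<close>,
  \<open>|M| = |M - F| + |M \<inter> F| \<le> \<nu>(G \<setminus> F) + |F' - F| \<le> 2 \<nu>(G \<setminus> F)\<close>, and the edge of \<open>F\<close> at \<open>w\<close>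
  (which exists by maximality) makes one of the two inequalities strict. Choosing \<open>F\<close> with
  \<open>\<nu>(G \<setminus> F) = l(G)\<close> gives \<open>L(G) < 2 l(G)\<close>.\<close>

lemma simple_graph_finite_edges: "simple_graph V E \<Longrightarrow> finite E"
  unfolding simple_graph_def by (meson PowI finite_Pow_iff finite_subset subsetI)

lemma matching_subset: "matching E M \<Longrightarrow> M \<subseteq> E"
  unfolding matching_def by blast

lemma matching_finite: "finite E \<Longrightarrow> matching E M \<Longrightarrow> finite M"
  using matching_subset finite_subset by blast

lemma matching_edges_eq:
  "matching E M \<Longrightarrow> x \<in> M \<Longrightarrow> y \<in> M \<Longrightarrow> v \<in> x \<Longrightarrow> v \<in> y \<Longrightarrow> x = y"
  unfolding matching_def by blast

lemma matching_mono: "matching E' M \<Longrightarrow> E' \<subseteq> E \<Longrightarrow> matching E M"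
  unfolding matching_def by blast

lemma matching_Diff: "matching E M \<Longrightarrow> matching (E - F) (M - F)"
  unfolding matching_def by blast

lemma matching_insert:
  "matching E M \<Longrightarrow> e \<in> E \<Longrightarrow> \<forall>x\<in>M. x \<inter> e = {} \<Longrightarrow> matching E (insert e M)"
  unfolding matching_def by blast

lemma finite_matching_cards: "finite E \<Longrightarrow> finite {card M |M. matching E M}"
proof -
  assume "finite E"
  moreover have "{card M |M. matching E M} \<subseteq> card ` Pow E"
    unfolding matching_def by blast
  ultimately show ?thesis
    by (meson finite_Pow_iff finite_imageI finite_subset)
qed

lemma card_le_nu: "finite E \<Longrightarrow> matching E M \<Longrightarrow> card M \<le> nu E"
  unfolding nu_def using finite_matching_cards by (blast intro: Max_ge)

lemma nu_attained:
  assumes "finite E"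
  obtains M where "matching E M" "card M = nu E"
proof -
  have "matching E {}"
    unfolding matching_def by simp
  then have "{card M |M. matching E M} \<noteq> {}"
    by blast
  then have "nu E \<in> {card M |M. matching E M}"
    unfolding nu_def using finite_matching_cards[OF assms] by (rule Max_in[rotated])
  then show ?thesis
    using that by auto
qed

lemma max_matching_cards_eq: "max_matching E F \<Longrightarrow> max_matching E F' \<Longrightarrow> card F = card F'"
  unfolding max_matching_def by simp

lemma residual_nu_values:
  assumes "finite E"
  shows "finite {nu (E - F) |F. max_matching E F}" "{nu (E - F) |F. max_matching E F} \<noteq> {}"
proof -
  have "{nu (E - F) |F. max_matching E F} \<subseteq> (\<lambda>F. nu (E - F)) ` Pow E"
    unfolding max_matching_def matching_def by blast
  then show "finite {nu (E - F) |F. max_matching E F}"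
    using assms by (meson finite_Pow_iff finite_imageI finite_subset)
  obtain M where "matching E M" "card M = nu E"
    using nu_attained[OF assms] .
  then show "{nu (E - F) |F. max_matching E F} \<noteq> {}"
    unfolding max_matching_def by blast
qed

lemma ll_attained:
  assumes "finite E"
  obtains F where "max_matching E F" "nu (E - F) = ll E"
proof -
  have "ll E \<in> {nu (E - F) |F. max_matching E F}"
    unfolding ll_def using residual_nu_values[OF assms] by (rule Min_in)
  then show ?thesis
    using that by auto
qed

lemma LL_attained:
  assumes "finite E"
  obtains F where "max_matching E F" "nu (E - F) = LL E"
proof -
  have "LL E \<in> {nu (E - F) |F. max_matching E F}"
    unfolding LL_def using residual_nu_values[OF assms] by (rule Max_in)
  then show ?thesis
    using that by auto
qed

definition pendant_edge :: "'a set set \<Rightarrow> 'a \<Rightarrow> 'a \<Rightarrow> bool" where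
  "pendant_edge E p w \<longleftrightarrow> {p, w} \<in> E \<and> (\<forall>e\<in>E. p \<in> e \<longrightarrow> e = {p, w})"

lemma degree_one_pendant_edge: "degree E p = 1 \<Longrightarrow> {p, w} \<in> E \<Longrightarrow> pendant_edge E p w"
  unfolding degree_def pendant_edge_def
  by (metis (no_types, lifting) card_1_singletonE mem_Collect_eq singletonD insertI1)

lemma pendant_edge_disjoint:
  "pendant_edge E p w \<Longrightarrow> x \<in> E \<Longrightarrow> w \<notin> x \<Longrightarrow> x \<inter> {p, w} = {}"
  unfolding pendant_edge_def by blast

lemma pendant_edge_Diff: "pendant_edge E p w \<Longrightarrow> {p, w} \<notin> F \<Longrightarrow> pendant_edge (E - F) p w"
  unfolding pendant_edge_def by blast

lemma matching_insert_pendant_edge: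
  assumes "matching E N" "pendant_edge E p w" "\<forall>x\<in>N. w \<notin> x"
  shows "matching E (insert {p, w} N)" "{p, w} \<notin> N"
proof -
  have "{p, w} \<in> E"
    using assms(2) unfolding pendant_edge_def by blast
  moreover have "\<forall>x\<in>N. x \<inter> {p, w} = {}"
    using assms(3) matching_subset[OF assms(1)] pendant_edge_disjoint[OF assms(2)] by blast
  ultimately show "matching E (insert {p, w} N)"
    by (rule matching_insert[OF assms(1)])
  show "{p, w} \<notin> N"
    using assms(3) by blast
qed

lemma card_less_nu_if_uncovered:
  assumes "finite E" "matching E N" "pendant_edge E p w" "\<forall>x\<in>N. w \<notin> x"
  shows "card N < nu E"
proof -
  have "card N < card (insert {p, w} N)"
    using matching_insert_pendant_edge(2)[OF assms(2-4)] matching_finite[OF assms(1,2)] by simp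
  also have "\<dots> \<le> nu E"
    using assms(1) matching_insert_pendant_edge(1)[OF assms(2-4)] by (rule card_le_nu)
  finally show ?thesis .
qed

lemma max_matching_covers_pendant_neighbour:
  assumes "finite E" "max_matching E F" "pendant_edge E p w"
  obtains f where "f \<in> F" "w \<in> f"
proof -
  have "\<exists>f\<in>F. w \<in> f"
  proof (rule ccontr)
    assume "\<not> (\<exists>f\<in>F. w \<in> f)"
    moreover have "matching E F"
      using assms(2) unfolding max_matching_def by simp
    ultimately have "card F < nu E"
      using card_less_nu_if_uncovered[OF assms(1) _ assms(3)] by blast
    then show False
      using assms(2) unfolding max_matching_def by simp
  qed
  then show ?thesis
    using that by blast
qed

lemma max_matching_exchange_pendant_edge:
  assumes "finite E" "max_matching E F'" "pendant_edge E p w"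
    and "matching (E - F') M" "{p, w} \<notin> M"
  obtains F'' where "max_matching E F''" "{p, w} \<in> F''" "matching (E - F'') M"
proof -
  obtain g where g: "g \<in> F'" "w \<in> g"
    using max_matching_covers_pendant_neighbour[OF assms(1-3)] .
  have F': "matching E F'" "finite F'"
    using assms(1,2) matching_finite unfolding max_matching_def by auto
  have "matching E (F' - {g})"
    using F'(1) by (rule matching_mono[OF matching_Diff]) blast
  moreover have "\<forall>x\<in>F' - {g}. w \<notin> x"
    using g matching_edges_eq[OF F'(1)] by blast
  ultimately have new: "matching E (insert {p, w} (F' - {g}))" "{p, w} \<notin> F' - {g}"
    using matching_insert_pendant_edge[OF _ assms(3)] by blast+
  define F'' where "F'' = insert {p, w} (F' - {g})"
  have "card F'' = Suc (card (F' - {g}))"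
    using new(2) F'(2) unfolding F''_def by simp
  also have "\<dots> = card F'"
    using F'(2) g(1) by (rule card_Suc_Diff1)
  finally have "max_matching E F''"
    using new(1) assms(2) unfolding F''_def max_matching_def by simp
  moreover have "matching (E - F'') M"
    using assms(4,5) unfolding F''_def matching_def by blast
  ultimately show ?thesis
    using that unfolding F''_def by blast
qed

lemma card_Diff_eq_if_card_eq:
  "finite A \<Longrightarrow> finite B \<Longrightarrow> card A = card B \<Longrightarrow> card (A - B) = card (B - A)"
  by (metis Int_commute card_Diff_subset_Int finite_Int)

lemma card_less_double_nu_if_slack:
  assumes E: "finite E" and F: "max_matching E F" and F': "max_matching E F'"
    and M: "matching (E - F') M"
    and slack: "card (M - F) < nu (E - F) \<or> card (F' - F) < nu (E - F) \<or> M \<inter> F \<subset> F - F'"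
  shows "card M < 2 * nu (E - F)"
proof -
  have mF: "matching E F" "finite F" and mF': "matching E F'" "finite F'"
    using E F F' matching_finite unfolding max_matching_def by auto
  have mM: "matching E M" "M \<subseteq> E - F'" "finite M"
    using M matching_subset[OF M] matching_finite[OF _ M] E by (auto intro: matching_mono)
  have EF: "finite (E - F)"
    using E by simp
  have split: "card M = card (M - F) + card (M \<inter> F)"
    using mM(3) by (metis Int_Diff_disjoint Int_commute Un_Diff_Int card_Un_disjoint finite_Diff finite_Int)
  have balance: "card (F - F') = card (F' - F)"
    using mF(2) mF'(2) max_matching_cards_eq[OF F F'] by (rule card_Diff_eq_if_card_eq)
  have residual_M: "card (M - F) \<le> nu (E - F)"
    using EF matching_Diff[OF mM(1)] by (rule card_le_nu)
  have residual_F': "card (F' - F) \<le> nu (E - F)"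
    using EF matching_Diff[OF mF'(1)] by (rule card_le_nu)
  have common: "card (M \<inter> F) \<le> card (F - F')"
    using mM(2) mF(2) by (intro card_mono) auto
  have "card (M \<inter> F) < card (F - F')" if "M \<inter> F \<subset> F - F'"
    using that mF(2) by (intro psubset_card_mono) auto
  then show ?thesis
    using slack split balance residual_M residual_F' common by linarith
qed

lemma card_less_double_nu:
  assumes E: "finite E" and F: "max_matching E F" and F': "max_matching E F'"
    and M: "matching (E - F') M"
    and p: "pendant_edge E p w" and q: "pendant_edge E q w" and "p \<noteq> q"
    and pF': "{p, w} \<in> F'"
  shows "card M < 2 * nu (E - F)"
proof (rule card_less_double_nu_if_slack[OF E F F' M])
  obtain f where f: "f \<in> F" "w \<in> f"
    using max_matching_covers_pendant_neighbour[OF E F p] .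
  have mF: "matching E F" and mF': "matching E F'"
    using F F' unfolding max_matching_def by auto
  have mM: "matching E M" "M \<subseteq> E - F'"
    using M matching_subset[OF M] by (auto intro: matching_mono)
  have EF: "finite (E - F)"
    using E by simp
  have pq: "{p, w} \<noteq> {q, w}"
    using \<open>p \<noteq> q\<close> by (auto simp: doubleton_eq_iff)
  consider (pendant) "f = {p, w}" | (in_M) "f \<noteq> {p, w}" "f \<in> M"
    | (elsewhere) "f \<noteq> {p, w}" "f \<notin> M"
    by blast
  then show "card (M - F) < nu (E - F) \<or> card (F' - F) < nu (E - F) \<or> M \<inter> F \<subset> F - F'"
  proof cases
    case pendant
    have "{q, w} \<notin> F"
      using matching_edges_eq[OF mF _ f(1) _ f(2)] pendant pq by blast
    moreover have "\<forall>x\<in>F' - F. w \<notin> x"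
      using matching_edges_eq[OF mF' _ pF'] f(1) pendant by blast
    ultimately have "card (F' - F) < nu (E - F)"
      by (intro card_less_nu_if_uncovered[OF EF matching_Diff[OF mF'] pendant_edge_Diff[OF q]])
    then show ?thesis
      by blast
  next
    case in_M
    have "{p, w} \<notin> F"
      using matching_edges_eq[OF mF _ f(1) _ f(2)] in_M(1) by blast
    moreover have "\<forall>x\<in>M - F. w \<notin> x"
      using matching_edges_eq[OF mM(1) _ in_M(2) _ f(2)] f(1) by blast
    ultimately have "card (M - F) < nu (E - F)"
      by (intro card_less_nu_if_uncovered[OF EF matching_Diff[OF mM(1)] pendant_edge_Diff[OF p]])
    then show ?thesis
      by blast
  next
    case elsewhere
    have "f \<notin> F'"
      using matching_edges_eq[OF mF' _ pF' f(2)] elsewhere(1) by blast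
    then have "M \<inter> F \<subset> F - F'"
      using mM(2) f(1) elsewhere(2) by blast
    then show ?thesis
      by blast
  qed
qed

lemma LL_less_double_ll:
  assumes E: "finite E" and "pendant_edge E p w" "pendant_edge E q w" "p \<noteq> q"
  shows "LL E < 2 * ll E"
proof -
  have avoiding: "card M < 2 * ll E"
    if p: "pendant_edge E p w" and q: "pendant_edge E q w" "p \<noteq> q"
      and F': "max_matching E F'" and M: "matching (E - F') M" "{p, w} \<notin> M" for p q F' M
  proof -
    obtain F'' where F'': "max_matching E F''" "{p, w} \<in> F''" "matching (E - F'') M"
      using max_matching_exchange_pendant_edge[OF E F' p M] .
    obtain F where F: "max_matching E F" "nu (E - F) = ll E"
      using ll_attained[OF E] .
    show ?thesis
      using card_less_double_nu[OF E F(1) F''(1) F''(3) p q F''(2)] unfolding F(2) .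
  qed
  obtain F' where F': "max_matching E F'" "nu (E - F') = LL E"
    using LL_attained[OF E] .
  obtain M where M: "matching (E - F') M" "card M = LL E"
    using nu_attained[of "E - F'"] E F'(2) by auto
  have "{p, w} \<notin> M \<or> {q, w} \<notin> M"
    using matching_edges_eq[OF M(1), of "{p, w}" "{q, w}" w] \<open>p \<noteq> q\<close>
    by (auto simp: doubleton_eq_iff)
  then show ?thesis
  proof
    assume "{p, w} \<notin> M"
    from avoiding[OF assms(2-4) F'(1) M(1) this] show ?thesis
      unfolding M(2) .
  next
    assume "{q, w} \<notin> M"
    from avoiding[OF assms(3,2) assms(4)[symmetric] F'(1) M(1) this] show ?thesis
      unfolding M(2) .
  qed
qed

theorem corollary1:
  fixes V :: "'a set" and E :: "'a set set"
  assumes "simple_graph V E"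
    and "LL E = 2 * ll E"
  shows "\<not> (\<exists>u v w. u \<in> V \<and> v \<in> V \<and> w \<in> V \<and> u \<noteq> v \<and>
             degree E u = 1 \<and> degree E v = 1 \<and> {u, w} \<in> E \<and> {v, w} \<in> E)"
proof
  assume "\<exists>u v w. u \<in> V \<and> v \<in> V \<and> w \<in> V \<and> u \<noteq> v \<and>
             degree E u = 1 \<and> degree E v = 1 \<and> {u, w} \<in> E \<and> {v, w} \<in> E"
  then obtain u v w where "u \<noteq> v" and u: "degree E u = 1" "{u, w} \<in> E"
    and v: "degree E v = 1" "{v, w} \<in> E"
    by blast
  have "LL E < 2 * ll E"
    using simple_graph_finite_edges[OF assms(1)] degree_one_pendant_edge[OF u]
      degree_one_pendant_edge[OF v] \<open>u \<noteq> v\<close> by (rule LL_less_double_ll)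
  with assms(2) show False
    by simp
qed

end
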